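(* Every nonempty relatively weakly open subset of the closed unit ball of Read's space $\mathcal R=(c_0,|||\cdot|||)$ has $|||\cdot|||$-diameter greater than or equal to $2/3$.
   Context: Let $c_{00}(\mathbb Q)$ be the set of finitely supported sequences with rational coefficients, and let $(u_n)_{n\in\mathbb N}$ be a sequence in $c_{00}(\mathbb Q)$ which lists every element of $c_{00}(\mathbb Q)$ infinitely many times. Let $(a_n)_{n\in\mathbb N}$ be a strictly increasing sequence of positive integers with $a_n>\max\operatorname{supp} u_n$ and $a_n>\|u_n\|_1$ for every $n$. $(e_n)$ denotes the canonical unit vectors and $\langle x,y\rangle=\sum_n x_ny_n$. Read's norm on $c_0$ is $|||x||| = \|x\|_\infty + \sum_{n} 2^{-a_n^2}|\langle x, u_n - e_{a_n}\rangle|$, and Read's space is $\mathcal R=(c_0,|||\cdot|||)$ (real scalars). *)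

theory Defs
  imports "HOL-Analysis.Analysis"
begin

text \<open>Sequences are modelled as functions nat => real; index set starts at 0.\<close>

definition c0 :: "(nat \<Rightarrow> real) set" where
  "c0 = {x. x \<longlonglongrightarrow> 0}"

definition c00Q :: "(nat \<Rightarrow> real) set" where
  "c00Q = {v. finite {k. v k \<noteq> 0} \<and> (\<forall>k. v k \<in> \<rat>)}"

definition supp :: "(nat \<Rightarrow> real) \<Rightarrow> nat set" where
  "supp v = {k. v k \<noteq> 0}"

definition l1norm :: "(nat \<Rightarrow> real) \<Rightarrow> real" where
  "l1norm v = (\<Sum>k\<in>supp v. \<bar>v k\<bar>)"

definition unitvec :: "nat \<Rightarrow> nat \<Rightarrow> real" where
  "unitvec m = (\<lambda>k. if k = m then 1 else 0)"

definition pairing :: "(nat \<Rightarrow> real) \<Rightarrow> (nat \<Rightarrow> real) \<Rightarrow> real" where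
  "pairing x y = (\<Sum>k. x k * y k)"

definition supnorm :: "(nat \<Rightarrow> real) \<Rightarrow> real" where
  "supnorm x = (SUP k. \<bar>x k\<bar>)"

definition read_params :: "(nat \<Rightarrow> nat \<Rightarrow> real) \<Rightarrow> (nat \<Rightarrow> nat) \<Rightarrow> bool" where
  "read_params u a \<longleftrightarrow>
     (\<forall>n. u n \<in> c00Q) \<and> (\<forall>v\<in>c00Q. infinite {n. u n = v}) \<and>
     strict_mono a \<and> (\<forall>n. a n > 0) \<and>
     (\<forall>n. \<forall>k\<in>supp (u n). k < a n) \<and> (\<forall>n. real (a n) > l1norm (u n))"

definition read_norm :: "(nat \<Rightarrow> nat \<Rightarrow> real) \<Rightarrow> (nat \<Rightarrow> nat) \<Rightarrow> (nat \<Rightarrow> real) \<Rightarrow> real" where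
  "read_norm u a x = supnorm x +
     (\<Sum>n. 2 powr (- real ((a n)^2)) * \<bar>pairing x (\<lambda>k. u n k - unitvec (a n) k)\<bar>)"

definition read_dual :: "(nat \<Rightarrow> nat \<Rightarrow> real) \<Rightarrow> (nat \<Rightarrow> nat) \<Rightarrow> ((nat \<Rightarrow> real) \<Rightarrow> real) set" where
  "read_dual u a = {f.
     (\<forall>x\<in>c0. \<forall>y\<in>c0. f (\<lambda>k. x k + y k) = f x + f y) \<and>
     (\<forall>c. \<forall>x\<in>c0. f (\<lambda>k. c * x k) = c * f x) \<and>
     (\<exists>C. \<forall>x\<in>c0. \<bar>f x\<bar> \<le> C * read_norm u a x)}"

definition read_weak_topology :: "(nat \<Rightarrow> nat \<Rightarrow> real) \<Rightarrow> (nat \<Rightarrow> nat) \<Rightarrow> (nat \<Rightarrow> real) topology" where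
  "read_weak_topology u a =
     topology_generated_by {{x\<in>c0. f x \<in> V} | f V. f \<in> read_dual u a \<and> open V}"

definition read_ball :: "(nat \<Rightarrow> nat \<Rightarrow> real) \<Rightarrow> (nat \<Rightarrow> nat) \<Rightarrow> (nat \<Rightarrow> real) set" where
  "read_ball u a = {x\<in>c0. read_norm u a x \<le> 1}"

definition read_diam :: "(nat \<Rightarrow> nat \<Rightarrow> real) \<Rightarrow> (nat \<Rightarrow> nat) \<Rightarrow> (nat \<Rightarrow> real) set \<Rightarrow> real" where
  "read_diam u a W = (SUP p\<in>W \<times> W. read_norm u a (\<lambda>k. fst p k - snd p k))"

end

theory Submission imports Defs begin

text \<open>Read's norm is the sup norm plus a series \<open>S x\<close> of weighted functionals. Their weights
  \<open>2 powr -(a n)^2\<close> decay so fast that \<open>S x \<le> 2 \<parallel>x\<parallel>\<^sub>\<infinity>\<close> and \<open>S e\<^sub>k \<rightarrow> 0\<close>; in particular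
  \<open>S x \<le> 2/3\<close> on the unit ball. Moreover every continuous functional tends to \<open>0\<close> on the unit
  vectors, since it is bounded on the uniformly bounded sign vectors \<open>\<Sum>k<n. \<plusminus>e\<^sub>k\<close>.
  Hence for \<open>x\<close> in the ball, small \<open>\<beta>\<close> and large \<open>k\<close>, the two points
  \<open>(1 - \<beta>) x \<plusminus> t e\<^sub>k\<close> with \<open>t = 1 - S x - \<beta>\<close> lie in the ball, are weakly close to \<open>x\<close>,
  and are at distance at least \<open>2 t \<ge> 2/3 - 2 \<beta>\<close>.\<close>

definition read_functional :: "(nat \<Rightarrow> nat \<Rightarrow> real) \<Rightarrow> (nat \<Rightarrow> nat) \<Rightarrow> nat \<Rightarrow> (nat \<Rightarrow> real) \<Rightarrow> real" where
  "read_functional u a n x = pairing x (\<lambda>k. u n k - unitvec (a n) k)"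

definition read_weight :: "(nat \<Rightarrow> nat) \<Rightarrow> nat \<Rightarrow> real" where
  "read_weight a n = 2 powr (- real ((a n)^2))"

definition read_series :: "(nat \<Rightarrow> nat \<Rightarrow> real) \<Rightarrow> (nat \<Rightarrow> nat) \<Rightarrow> (nat \<Rightarrow> real) \<Rightarrow> real" where
  "read_series u a x = (\<Sum>n. read_weight a n * \<bar>read_functional u a n x\<bar>)"

lemma read_norm_eq: "read_norm u a x = supnorm x + read_series u a x"
  unfolding read_norm_def read_series_def read_weight_def read_functional_def by simp

lemma read_params_Suc_le:
  assumes "read_params u a"
  shows "Suc n \<le> a n"
proof (induction n)
  case 0
  show ?case using assms unfolding read_params_def by (simp add: Suc_le_eq)
next
  case (Suc n)
  have "a n < a (Suc n)" using assms unfolding read_params_def strict_mono_def by auto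
  then show ?case using Suc by simp
qed

lemma read_params_supp:
  assumes "read_params u a"
  shows "finite (supp (u n))" and "\<forall>k\<in>supp (u n). k < a n" and "l1norm (u n) < real (a n)"
  using assms unfolding read_params_def c00Q_def supp_def by auto

lemma Suc_mult_pow2_le_pow2_square:
  assumes "n < (m::nat)"
  shows "(m + 1) * 2^n \<le> (2::nat)^(m^2)"
proof -
  have "m + 1 \<le> 2^m" using less_exp[of m] by (simp add: Suc_le_eq)
  moreover have "(2::nat)^n \<le> 2^(m - 1)" using assms by (intro power_increasing) auto
  ultimately have "(m + 1) * 2^n \<le> 2^m * 2^(m - 1)" by (intro mult_mono) auto
  also have "\<dots> = 2^(m + (m - 1))" by (simp add: power_add)
  also have "\<dots> \<le> 2^(m^2)"
    by (intro power_increasing) (use assms in \<open>cases m, auto simp: power2_eq_square\<close>)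
  finally show ?thesis .
qed

lemma read_weight_pos: "read_weight a n > 0"
  unfolding read_weight_def by simp

lemma read_weight_mult_le:
  assumes "read_params u a"
  shows "read_weight a n * (real (a n) + 1) \<le> (1/2)^n"
proof -
  let ?m = "a n"
  have "real ((?m + 1) * 2^n) \<le> real ((2::nat)^(?m^2))"
    using Suc_mult_pow2_le_pow2_square read_params_Suc_le[OF assms, of n]
    by (simp only: of_nat_le_iff Suc_le_eq)
  then have h: "(real ?m + 1) * 2^n \<le> 2^(?m^2)" by (simp add: algebra_simps)
  have w: "read_weight a n = 1 / 2^(?m^2)"
  proof -
    have "2 powr (real (?m^2)) = 2^(?m^2)" by (rule powr_realpow) simp
    then show ?thesis unfolding read_weight_def by (simp add: powr_minus divide_inverse)
  qed
  show ?thesis unfolding w using h by (simp add: field_simps power_one_over)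
qed

lemma read_functional_eq_sum:
  assumes rp: "read_params u a"
  shows "read_functional u a n x = (\<Sum>k\<in>supp (u n). x k * u n k) - x (a n)"
proof -
  note fin = read_params_supp(1)[OF rp]
  have an: "a n \<notin> supp (u n)" using read_params_supp(2)[OF rp, of n] by auto
  have "read_functional u a n x
        = (\<Sum>k\<in>insert (a n) (supp (u n)). x k * (u n k - unitvec (a n) k))"
    unfolding read_functional_def pairing_def
    by (rule suminf_finite) (use fin in \<open>auto simp: supp_def unitvec_def\<close>)
  also have "\<dots> = x (a n) * (u n (a n) - 1) + (\<Sum>k\<in>supp (u n). x k * (u n k - unitvec (a n) k))"
    using an fin by (simp add: unitvec_def)
  also have "(\<Sum>k\<in>supp (u n). x k * (u n k - unitvec (a n) k)) = (\<Sum>k\<in>supp (u n). x k * u n k)"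
    by (rule sum.cong) (use an in \<open>auto simp: unitvec_def\<close>)
  also have "u n (a n) = 0" using an by (simp add: supp_def)
  finally show ?thesis by simp
qed

lemma read_functional_lincomb:
  assumes "read_params u a"
  shows "read_functional u a n (\<lambda>k. s * x k + t * y k)
           = s * read_functional u a n x + t * read_functional u a n y"
  unfolding read_functional_eq_sum[OF assms] by (simp add: sum.distrib sum_distrib_left algebra_simps)

lemma abs_read_functional_le:
  assumes rp: "read_params u a" and M: "\<And>k. \<bar>x k\<bar> \<le> M"
  shows "\<bar>read_functional u a n x\<bar> \<le> M * (real (a n) + 1)"
proof -
  have "\<bar>\<Sum>k\<in>supp (u n). x k * u n k\<bar> \<le> (\<Sum>k\<in>supp (u n). \<bar>x k * u n k\<bar>)" by (rule sum_abs)
  also have "\<dots> \<le> (\<Sum>k\<in>supp (u n). M * \<bar>u n k\<bar>)"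
    by (rule sum_mono) (simp add: abs_mult M mult_right_mono)
  also have "\<dots> = M * l1norm (u n)" unfolding l1norm_def by (simp add: sum_distrib_left)
  also have "\<dots> \<le> M * real (a n)"
    using read_params_supp(3)[OF rp, of n] M[of 0] by (intro mult_left_mono) auto
  finally show ?thesis unfolding read_functional_eq_sum[OF rp] using M[of "a n"] by (simp add: algebra_simps)
qed

lemma read_functional_unitvec:
  assumes rp: "read_params u a" and "a n < k"
  shows "read_functional u a n (unitvec k) = 0"
proof -
  have "u n k = 0" using read_params_supp(2)[OF rp, of n] assms(2) by (auto simp: supp_def)
  then show ?thesis unfolding read_functional_eq_sum[OF rp] using assms(2)
    by (auto simp: unitvec_def intro!: sum.neutral)
qed

subsection \<open>The series part of Read's norm\<close>

lemma abs_le_supnorm: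
  assumes "\<And>k. \<bar>x k\<bar> \<le> M"
  shows "\<bar>x k\<bar> \<le> supnorm x"
  unfolding supnorm_def by (rule cSUP_upper) (use assms in \<open>auto intro!: bdd_aboveI[of _ M]\<close>)

lemma supnorm_le:
  assumes "\<And>k. \<bar>x k\<bar> \<le> M"
  shows "supnorm x \<le> M"
  unfolding supnorm_def by (rule cSUP_least) (use assms in auto)

lemma read_series_term_le:
  assumes rp: "read_params u a" and M: "\<And>k. \<bar>x k\<bar> \<le> M"
  shows "read_weight a n * \<bar>read_functional u a n x\<bar> \<le> M * (1/2)^n"
proof -
  have "read_weight a n * \<bar>read_functional u a n x\<bar> \<le> read_weight a n * (M * (real (a n) + 1))"
    using abs_read_functional_le[OF rp M] read_weight_pos[of a n] by (intro mult_left_mono) auto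
  also have "\<dots> = M * (read_weight a n * (real (a n) + 1))" by simp
  also have "\<dots> \<le> M * (1/2)^n"
    using M[of 0] by (intro mult_left_mono read_weight_mult_le[OF rp]) auto
  finally show ?thesis .
qed

lemma summable_read_series:
  assumes rp: "read_params u a" and M: "\<And>k. \<bar>x k\<bar> \<le> M"
  shows "summable (\<lambda>n. read_weight a n * \<bar>read_functional u a n x\<bar>)"
proof (rule summable_comparison_test')
  show "summable (\<lambda>n. M * (1/2::real)^n)" by (intro summable_mult summable_geometric) simp
  show "norm (read_weight a n * \<bar>read_functional u a n x\<bar>) \<le> M * (1/2)^n" for n
    using read_series_term_le[OF rp M, of n] read_weight_pos[of a n] by (simp add: abs_mult)
qed

lemma read_series_le:
  assumes rp: "read_params u a" and M: "\<And>k. \<bar>x k\<bar> \<le> M"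
  shows "read_series u a x \<le> 2 * M"
proof -
  have "read_series u a x \<le> (\<Sum>n. M * (1/2::real)^n)"
    unfolding read_series_def
    by (rule suminf_le[OF read_series_term_le[OF rp M] summable_read_series[OF rp M]])
      (intro summable_mult summable_geometric, simp)
  also have "\<dots> = 2 * M" using suminf_geometric[of "1/2::real"] by (simp add: suminf_mult)
  finally show ?thesis .
qed

lemma read_series_nonneg:
  assumes rp: "read_params u a" and M: "\<And>k. \<bar>x k\<bar> \<le> M"
  shows "read_series u a x \<ge> 0"
  unfolding read_series_def
  by (rule suminf_nonneg[OF summable_read_series[OF rp M]]) (simp add: read_weight_pos less_imp_le)

lemma read_series_lincomb_le:
  assumes rp: "read_params u a" and x: "\<And>k. \<bar>x k\<bar> \<le> M" and y: "\<And>k. \<bar>y k\<bar> \<le> N"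
  shows "read_series u a (\<lambda>k. s * x k + c * y k) \<le> \<bar>s\<bar> * read_series u a x + \<bar>c\<bar> * read_series u a y"
proof -
  let ?T = "\<lambda>z n. read_weight a n * \<bar>read_functional u a n z\<bar>"
  have z: "\<bar>s * x k + c * y k\<bar> \<le> \<bar>s\<bar> * M + \<bar>c\<bar> * N" for k
  proof -
    have "\<bar>s * x k + c * y k\<bar> \<le> \<bar>s\<bar> * \<bar>x k\<bar> + \<bar>c\<bar> * \<bar>y k\<bar>"
      using abs_triangle_ineq[of "s * x k" "c * y k"] by (simp add: abs_mult)
    also have "\<dots> \<le> \<bar>s\<bar> * M + \<bar>c\<bar> * N" by (intro add_mono mult_left_mono x y) auto
    finally show ?thesis .
  qed
  have termwise: "?T (\<lambda>k. s * x k + c * y k) n \<le> \<bar>s\<bar> * ?T x n + \<bar>c\<bar> * ?T y n" for n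
  proof -
    let ?f = "read_functional u a n"
    have "\<bar>?f (\<lambda>k. s * x k + c * y k)\<bar> \<le> \<bar>s\<bar> * \<bar>?f x\<bar> + \<bar>c\<bar> * \<bar>?f y\<bar>"
      unfolding read_functional_lincomb[OF rp]
      using abs_triangle_ineq[of "s * ?f x" "c * ?f y"] by (simp add: abs_mult)
    then have "?T (\<lambda>k. s * x k + c * y k) n \<le> read_weight a n * (\<bar>s\<bar> * \<bar>?f x\<bar> + \<bar>c\<bar> * \<bar>?f y\<bar>)"
      using read_weight_pos[of a n] by (intro mult_left_mono) auto
    then show ?thesis by (simp add: algebra_simps)
  qed
  have sx: "summable (?T x)" and sy: "summable (?T y)"
    using summable_read_series[OF rp x] summable_read_series[OF rp y] .
  have "read_series u a (\<lambda>k. s * x k + c * y k) \<le> (\<Sum>n. \<bar>s\<bar> * ?T x n + \<bar>c\<bar> * ?T y n)"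
    unfolding read_series_def
    by (rule suminf_le[OF termwise summable_read_series[OF rp z]])
      (intro summable_add summable_mult sx sy)
  also have "\<dots> = \<bar>s\<bar> * read_series u a x + \<bar>c\<bar> * read_series u a y"
    unfolding read_series_def using sx sy
    by (subst suminf_add[symmetric]) (auto intro!: summable_mult simp: suminf_mult)
  finally show ?thesis .
qed

lemma read_series_unitvec_le:
  assumes rp: "read_params u a" and k: "a N \<le> k"
  shows "read_series u a (unitvec k) \<le> 2 * (1/2)^N"
proof -
  define g where "g n = read_weight a n * \<bar>read_functional u a n (unitvec k)\<bar>" for n
  have bdd: "\<bar>unitvec k j\<bar> \<le> 1" for j by (simp add: unitvec_def)
  have sg: "summable g" unfolding g_def using summable_read_series[OF rp bdd] .
  have g0: "g i = 0" if "i < N" for i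
  proof -
    have "a i < a N" using rp that unfolding read_params_def strict_mono_def by auto
    then show ?thesis unfolding g_def using read_functional_unitvec[OF rp, of i k] k by simp
  qed
  have "suminf g = (\<Sum>n. g (n + N)) + (\<Sum>i<N. g i)" by (rule suminf_split_initial_segment[OF sg])
  also have "(\<Sum>i<N. g i) = 0" using g0 by simp
  also have "(\<Sum>n. g (n + N)) \<le> (\<Sum>n. (1/2)^N * (1/2::real)^n)"
  proof (rule suminf_le)
    show "g (n + N) \<le> (1/2)^N * (1/2)^n" for n
      using read_series_term_le[OF rp bdd, of "n + N"] by (simp add: g_def power_add mult.commute)
    show "summable (\<lambda>n. g (n + N))" using sg by (rule summable_ignore_initial_segment)
    show "summable (\<lambda>n. (1/2)^N * (1/2::real)^n)" by (intro summable_mult summable_geometric) simp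
  qed
  also have "\<dots> = 2 * (1/2)^N" using suminf_geometric[of "1/2::real"] by (simp add: suminf_mult)
  finally show ?thesis unfolding g_def read_series_def by simp
qed

lemma read_series_unitvec_tendsto_0:
  assumes rp: "read_params u a"
  shows "(\<lambda>k. read_series u a (unitvec k)) \<longlonglongrightarrow> 0"
proof (rule LIMSEQ_I)
  fix r :: real assume "r > 0"
  then obtain N where N: "(1/2::real)^N < r/2"
    using LIMSEQ_power_zero[of "1/2::real"] order_tendstoD(2)[of _ 0 sequentially "r/2"]
    by (auto simp: eventually_sequentially)
  have "norm (read_series u a (unitvec k) - 0) < r" if "a N \<le> k" for k
    using read_series_unitvec_le[OF rp that] N
      read_series_nonneg[OF rp, of "unitvec k" 1] by (simp add: unitvec_def)
  then show "\<exists>no. \<forall>k\<ge>no. norm (read_series u a (unitvec k) - 0) < r" by blast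
qed

lemma read_norm_le:
  assumes rp: "read_params u a" and M: "\<And>k. \<bar>x k\<bar> \<le> M"
  shows "read_norm u a x \<le> 3 * M"
proof -
  have "supnorm x \<le> M" using M by (rule supnorm_le)
  moreover have "read_series u a x \<le> 2 * M" using rp M by (rule read_series_le)
  ultimately show ?thesis unfolding read_norm_eq by linarith
qed

lemma abs_le_read_norm:
  assumes rp: "read_params u a" and M: "\<And>k. \<bar>x k\<bar> \<le> M"
  shows "\<bar>x j\<bar> \<le> read_norm u a x"
proof -
  have "\<bar>x j\<bar> \<le> supnorm x" using M by (rule abs_le_supnorm)
  moreover have "read_series u a x \<ge> 0" using rp M by (rule read_series_nonneg)
  ultimately show ?thesis unfolding read_norm_eq by linarith
qed

lemma read_series_le_two_thirds:
  assumes rp: "read_params u a" and M: "\<And>k. \<bar>x k\<bar> \<le> M" and "read_norm u a x \<le> 1"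
  shows "read_series u a x \<le> 2/3"
proof -
  have "\<bar>x k\<bar> \<le> supnorm x" for k using M by (rule abs_le_supnorm)
  then have "read_series u a x \<le> 2 * supnorm x" using rp by (intro read_series_le)
  then show ?thesis using assms(3) unfolding read_norm_eq by linarith
qed

lemma c0_bounded:
  assumes "x \<in> c0"
  obtains M where "\<And>k. \<bar>x k\<bar> \<le> M"
proof -
  have "Bseq x" using assms unfolding c0_def by (auto intro: convergent_imp_Bseq convergentI)
  then show ?thesis using that unfolding Bseq_def by (metis real_norm_def)
qed

lemma read_norm_diff_le_six:
  assumes rp: "read_params u a" and "x \<in> read_ball u a" "y \<in> read_ball u a"
  shows "read_norm u a (\<lambda>j. x j - y j) \<le> 6"
proof -
  have ball_coord: "\<bar>z j\<bar> \<le> 1" if "z \<in> read_ball u a" for z j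
  proof -
    from that have "z \<in> c0" "read_norm u a z \<le> 1" unfolding read_ball_def by auto
    moreover obtain M where "\<And>k. \<bar>z k\<bar> \<le> M" using c0_bounded[OF \<open>z \<in> c0\<close>] by blast
    then have "\<bar>z j\<bar> \<le> read_norm u a z" using rp by (intro abs_le_read_norm)
    ultimately show ?thesis by linarith
  qed
  have "\<bar>x j - y j\<bar> \<le> 2" for j
    using ball_coord[OF assms(2), of j] ball_coord[OF assms(3), of j] by linarith
  then show ?thesis using rp by (intro read_norm_le[where M = 2, simplified])
qed

subsection \<open>The dual and the weak topology\<close>

lemma eventually_zero_in_c0:
  assumes "\<And>j. j \<ge> N \<Longrightarrow> x j = 0"
  shows "x \<in> c0"
  unfolding c0_def mem_Collect_eq
  by (rule tendsto_eventually) (use assms in \<open>auto simp: eventually_sequentially\<close>)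

lemma unitvec_in_c0: "unitvec k \<in> c0"
  by (rule eventually_zero_in_c0[of "Suc k"]) (simp add: unitvec_def)

lemma c0_lincomb:
  assumes "x \<in> c0" "y \<in> c0"
  shows "(\<lambda>k. s * x k + t * y k) \<in> c0"
  using assms unfolding c0_def by (auto intro!: tendsto_add_zero tendsto_mult_right_zero)

lemma read_dual_lincomb:
  assumes f: "f \<in> read_dual u a" and "x \<in> c0" "y \<in> c0"
  shows "f (\<lambda>k. s * x k + t * y k) = s * f x + t * f y"
proof -
  have sx: "(\<lambda>k. s * x k) \<in> c0" and ty: "(\<lambda>k. t * y k) \<in> c0"
    using c0_lincomb[OF assms(2,3), of _ 0] c0_lincomb[OF assms(2,3), of 0] by auto
  have "f (\<lambda>k. s * x k + t * y k) = f (\<lambda>k. s * x k) + f (\<lambda>k. t * y k)"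
  proof -
    have "\<forall>x\<in>c0. \<forall>y\<in>c0. f (\<lambda>k. x k + y k) = f x + f y" using f by (simp add: read_dual_def)
    from bspec[OF bspec[OF this sx] ty] show ?thesis by simp
  qed
  also have "\<dots> = s * f x + t * f y" using assms unfolding read_dual_def by auto
  finally show ?thesis .
qed

lemma read_dual_unitvec_tendsto_0:
  assumes rp: "read_params u a" and f: "f \<in> read_dual u a"
  shows "(\<lambda>k. f (unitvec k)) \<longlonglongrightarrow> 0"
proof -
  obtain C where C: "\<forall>x\<in>c0. \<bar>f x\<bar> \<le> C * read_norm u a x" using f unfolding read_dual_def by auto
  define X where "X n = (\<lambda>j. if j < n then sgn (f (unitvec j)) else 0)" for n
  have X_c0: "X n \<in> c0" for n by (rule eventually_zero_in_c0[of n]) (simp add: X_def)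
  have X_bdd: "\<bar>X n j\<bar> \<le> 1" for n j by (simp add: X_def sgn_real_def)
  have f_X: "f (X n) = (\<Sum>k<n. \<bar>f (unitvec k)\<bar>)" for n
  proof (induction n)
    case 0
    have "X 0 = (\<lambda>j. 0 * unitvec 0 j + 0 * unitvec 0 j)" by (simp add: X_def)
    then show ?case using read_dual_lincomb[OF f unitvec_in_c0 unitvec_in_c0, of 0 0 0 0] by simp
  next
    case (Suc n)
    have "X (Suc n) = (\<lambda>j. 1 * X n j + sgn (f (unitvec n)) * unitvec n j)"
      by (rule ext) (simp add: X_def unitvec_def less_Suc_eq)
    then have "f (X (Suc n)) = f (X n) + sgn (f (unitvec n)) * f (unitvec n)"
      using read_dual_lincomb[OF f X_c0 unitvec_in_c0, of 1 n "sgn (f (unitvec n))" n] by simp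
    then show ?case using Suc by (simp add: sgn_real_def abs_if)
  qed
  have "(\<Sum>k<n. \<bar>f (unitvec k)\<bar>) \<le> \<bar>C\<bar> * 3" for n
  proof -
    have "(\<Sum>k<n. \<bar>f (unitvec k)\<bar>) \<le> \<bar>f (X n)\<bar>" unfolding f_X by simp
    also have "\<dots> \<le> C * read_norm u a (X n)" using C X_c0 by blast
    also have "\<dots> \<le> \<bar>C\<bar> * read_norm u a (X n)"
    proof -
      have "\<bar>X n 0\<bar> \<le> read_norm u a (X n)" using rp X_bdd by (rule abs_le_read_norm)
      then show ?thesis by (intro mult_right_mono) auto
    qed
    also have "\<dots> \<le> \<bar>C\<bar> * 3"
      using read_norm_le[OF rp X_bdd] by (intro mult_left_mono) auto
    finally show ?thesis .
  qed
  then have "summable (\<lambda>k. \<bar>f (unitvec k)\<bar>)"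
    by (intro bounded_imp_summable[where B = "\<bar>C\<bar> * 3"])
      (simp_all only: lessThan_Suc_atMost[symmetric] abs_ge_zero)
  then show ?thesis using summable_LIMSEQ_zero tendsto_rabs_zero_iff by blast
qed

lemma read_weak_open_basic_nbhd:
  assumes "openin (read_weak_topology u a) U" "x0 \<in> U"
  obtains F \<epsilon> where "finite F" "F \<subseteq> read_dual u a" "\<epsilon> > 0"
    "\<And>z. z \<in> c0 \<Longrightarrow> (\<And>f. f \<in> F \<Longrightarrow> \<bar>f z - f x0\<bar> < \<epsilon>) \<Longrightarrow> z \<in> U"
proof -
  have "generate_topology_on {{x\<in>c0. f x \<in> V} | f V. f \<in> read_dual u a \<and> open V} U"
    using assms(1) unfolding read_weak_topology_def openin_topology_generated_by_iff .
  then have "\<exists>F \<epsilon>. finite F \<and> F \<subseteq> read_dual u a \<and> \<epsilon> > 0 \<and>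
               (\<forall>z\<in>c0. (\<forall>f\<in>F. \<bar>f z - f x0\<bar> < \<epsilon>) \<longrightarrow> z \<in> U)"
    using assms(2)
  proof (induction arbitrary: x0)
    case Empty
    then show ?case by simp
  next
    case (Int A B)
    obtain F1 e1 where "finite F1" "F1 \<subseteq> read_dual u a" "e1 > 0"
      "\<forall>z\<in>c0. (\<forall>f\<in>F1. \<bar>f z - f x0\<bar> < e1) \<longrightarrow> z \<in> A" using Int.IH(1)[of x0] Int.prems by auto
    moreover obtain F2 e2 where "finite F2" "F2 \<subseteq> read_dual u a" "e2 > 0"
      "\<forall>z\<in>c0. (\<forall>f\<in>F2. \<bar>f z - f x0\<bar> < e2) \<longrightarrow> z \<in> B" using Int.IH(2)[of x0] Int.prems by auto
    ultimately show ?case by (intro exI[of _ "F1 \<union> F2"] exI[of _ "min e1 e2"]) auto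
  next
    case (UN K)
    then obtain k where "k \<in> K" "x0 \<in> k" by auto
    with UN obtain F e where "finite F" "F \<subseteq> read_dual u a" "e > 0"
      "\<forall>z\<in>c0. (\<forall>f\<in>F. \<bar>f z - f x0\<bar> < e) \<longrightarrow> z \<in> k" by meson
    then show ?case using \<open>k \<in> K\<close> by blast
  next
    case (Basis s)
    then obtain f V where fV: "s = {x\<in>c0. f x \<in> V}" "f \<in> read_dual u a" "open V" by auto
    then have "f x0 \<in> V" using Basis by auto
    then obtain e where e: "e > 0" "ball (f x0) e \<subseteq> V" using fV(3) open_contains_ball by blast
    then have "\<forall>z\<in>c0. \<bar>f z - f x0\<bar> < e \<longrightarrow> z \<in> s"
      using fV(1) by (auto simp: dist_real_def abs_minus_commute)
    then show ?case using fV(2) e(1) by (intro exI[of _ "{f}"] exI[of _ e]) auto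
  qed
  then obtain F \<epsilon> where nbhd: "finite F" "F \<subseteq> read_dual u a" "\<epsilon> > 0"
    "\<forall>z\<in>c0. (\<forall>f\<in>F. \<bar>f z - f x0\<bar> < \<epsilon>) \<longrightarrow> z \<in> U" by blast
  show ?thesis by (rule that[OF nbhd(1-3)]) (use nbhd(4) in blast)
qed

subsection \<open>Weakly close points far apart in norm\<close>

lemma read_norm_perturb_le_one:
  assumes rp: "read_params u a" and x0: "x0 \<in> c0" "read_norm u a x0 \<le> 1"
    and \<beta>: "0 \<le> \<beta>" "\<beta> \<le> 1"
    and k: "\<bar>x0 k\<bar> \<le> \<beta>/2" "read_series u a (unitvec k) \<le> \<beta>/2"
    and c: "\<bar>c\<bar> \<le> 1 - read_series u a x0 - \<beta>"
  shows "read_norm u a (\<lambda>j. (1 - \<beta>) * x0 j + c * unitvec k j) \<le> 1"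
proof -
  obtain M where M: "\<And>j. \<bar>x0 j\<bar> \<le> M" using c0_bounded[OF x0(1)] by blast
  have e_bdd: "\<bar>unitvec k j\<bar> \<le> 1" for j by (simp add: unitvec_def)
  define s where "s = 1 - \<beta>"
  define S0 where "S0 = read_series u a x0"
  define z where "z = (\<lambda>j. s * x0 j + c * unitvec k j)"
  have s: "0 \<le> s" "s \<le> 1" using \<beta> unfolding s_def by auto
  have S0: "0 \<le> S0" unfolding S0_def using rp M by (rule read_series_nonneg)
  have x0_norm: "supnorm x0 + S0 \<le> 1" using x0(2) unfolding read_norm_eq S0_def .
  have "\<bar>z j\<bar> \<le> max (s * supnorm x0) (\<beta>/2 + \<bar>c\<bar>)" for j
  proof (cases "j = k")
    case True
    have "\<bar>z j\<bar> \<le> s * \<bar>x0 k\<bar> + \<bar>c\<bar>"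
      unfolding z_def True using s abs_triangle_ineq[of "s * x0 k" c] by (simp add: unitvec_def abs_mult)
    also have "s * \<bar>x0 k\<bar> \<le> \<beta>/2" using s k(1) mult_mono[of s 1 "\<bar>x0 k\<bar>" "\<beta>/2"] by simp
    finally show ?thesis by simp
  next
    case False
    have "\<bar>z j\<bar> = s * \<bar>x0 j\<bar>" unfolding z_def using False s by (simp add: unitvec_def abs_mult)
    also have "\<dots> \<le> s * supnorm x0" using M s by (intro mult_left_mono abs_le_supnorm) auto
    finally show ?thesis by simp
  qed
  then have sup_z: "supnorm z \<le> max (s * supnorm x0) (\<beta>/2 + \<bar>c\<bar>)" by (rule supnorm_le)
  have "read_series u a z \<le> \<bar>s\<bar> * S0 + \<bar>c\<bar> * read_series u a (unitvec k)"
    unfolding z_def S0_def using rp M e_bdd by (rule read_series_lincomb_le)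
  also have "\<dots> \<le> s * S0 + \<bar>c\<bar> * (\<beta>/2)" using s k(2) by (intro add_mono mult_left_mono) auto
  finally have series_z: "read_series u a z \<le> s * S0 + \<bar>c\<bar> * (\<beta>/2)" .
  have "s * supnorm x0 + s * S0 \<le> s"
    using mult_left_mono[OF x0_norm s(1)] by (simp add: distrib_left)
  moreover have "s * S0 \<le> S0" using mult_right_mono[OF s(2) S0] by simp
  moreover have "\<bar>c\<bar> * (\<beta>/2) \<le> \<beta>/2"
    using c S0 \<beta> mult_right_mono[of "\<bar>c\<bar>" 1 "\<beta>/2"] unfolding S0_def by simp
  ultimately have "max (s * supnorm x0) (\<beta>/2 + \<bar>c\<bar>) \<le> 1 - (s * S0 + \<bar>c\<bar> * (\<beta>/2))"
    using c \<beta> unfolding s_def S0_def by (intro max.boundedI) linarith+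
  then show ?thesis using sup_z series_z unfolding read_norm_eq z_def s_def by linarith
qed

lemma read_ball_weakly_close_far_pair:
  assumes rp: "read_params u a" and x0: "x0 \<in> read_ball u a"
    and F: "finite F" "F \<subseteq> read_dual u a" and \<epsilon>: "\<epsilon> > 0" and \<delta>: "\<delta> > 0"
  obtains z1 z2 where "z1 \<in> read_ball u a" "z2 \<in> read_ball u a"
    "\<And>f. f \<in> F \<Longrightarrow> \<bar>f z1 - f x0\<bar> < \<epsilon>" "\<And>f. f \<in> F \<Longrightarrow> \<bar>f z2 - f x0\<bar> < \<epsilon>"
    "read_norm u a (\<lambda>j. z1 j - z2 j) \<ge> 2/3 - \<delta>"
proof -
  have x0_c0: "x0 \<in> c0" and x0_norm: "read_norm u a x0 \<le> 1" using x0 unfolding read_ball_def by auto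
  obtain M where M: "\<And>j. \<bar>x0 j\<bar> \<le> M" using c0_bounded[OF x0_c0] by blast
  define S0 where "S0 = read_series u a x0"
  have "0 \<le> S0" unfolding S0_def using rp M by (rule read_series_nonneg)
  moreover have "S0 \<le> 2/3" unfolding S0_def using rp M x0_norm by (rule read_series_le_two_thirds)
  ultimately have S0: "0 \<le> S0" "S0 \<le> 2/3" by blast+
  define B where "B = (\<Sum>f\<in>F. \<bar>f x0\<bar>)"
  have B: "B \<ge> 0" unfolding B_def by (simp add: sum_nonneg)
  define \<beta> where "\<beta> = min (1/6) (min (\<delta>/2) (\<epsilon> / (2 * (B + 1))))"
  have "0 < \<beta>" unfolding \<beta>_def using \<delta> \<epsilon> B by simp
  moreover have "\<beta> \<le> 1/6" unfolding \<beta>_def by (rule min.cobounded1)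
  moreover have "\<beta> \<le> \<delta>/2" unfolding \<beta>_def by (rule order_trans[OF min.cobounded2 min.cobounded1])
  ultimately have \<beta>: "0 < \<beta>" "\<beta> \<le> 1/6" "\<beta> \<le> \<delta>/2" by blast+
  have "\<beta> \<le> \<epsilon> / (2 * (B + 1))" unfolding \<beta>_def by (rule order_trans[OF min.cobounded2 min.cobounded2])
  then have "\<beta> * (B + 1) \<le> \<epsilon> / (2 * (B + 1)) * (B + 1)" by (rule mult_right_mono) (use B in simp)
  also have "\<dots> = \<epsilon>/2" using B by (simp add: field_simps)
  finally have \<beta>_B: "\<beta> * (B + 1) \<le> \<epsilon>/2" .
  have \<beta>_f: "\<beta> * \<bar>f x0\<bar> < \<epsilon>/2" if "f \<in> F" for f
  proof -
    have "\<bar>f x0\<bar> \<le> B" unfolding B_def using F(1) that by (intro member_le_sum) auto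
    then have "\<beta> * \<bar>f x0\<bar> < \<beta> * (B + 1)" using \<beta>(1) by (intro mult_strict_left_mono) auto
    then show ?thesis using \<beta>_B by linarith
  qed
  have "\<forall>\<^sub>F k in sequentially. (\<forall>f\<in>F. \<bar>f (unitvec k)\<bar> < \<epsilon>/2) \<and> \<bar>x0 k\<bar> < \<beta>/2
          \<and> read_series u a (unitvec k) < \<beta>/2"
  proof (intro eventually_conj eventually_ball_finite[OF F(1)] ballI)
    fix f assume "f \<in> F"
    then have "(\<lambda>k. f (unitvec k)) \<longlonglongrightarrow> 0" using F(2) by (intro read_dual_unitvec_tendsto_0[OF rp]) auto
    then have "(\<lambda>k. \<bar>f (unitvec k)\<bar>) \<longlonglongrightarrow> 0" by (simp only: tendsto_rabs_zero_iff)
    then show "\<forall>\<^sub>F k in sequentially. \<bar>f (unitvec k)\<bar> < \<epsilon>/2" by (rule order_tendstoD) (use \<epsilon> in simp)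
  next
    have "(\<lambda>k. \<bar>x0 k\<bar>) \<longlonglongrightarrow> 0" using x0_c0 unfolding c0_def by (simp only: tendsto_rabs_zero_iff mem_Collect_eq)
    then show "\<forall>\<^sub>F k in sequentially. \<bar>x0 k\<bar> < \<beta>/2" by (rule order_tendstoD) (use \<beta>(1) in simp)
  next
    show "\<forall>\<^sub>F k in sequentially. read_series u a (unitvec k) < \<beta>/2"
      by (rule order_tendstoD[OF read_series_unitvec_tendsto_0[OF rp]]) (use \<beta>(1) in simp)
  qed
  then obtain k where k_F: "\<forall>f\<in>F. \<bar>f (unitvec k)\<bar> < \<epsilon>/2" and k_x0: "\<bar>x0 k\<bar> < \<beta>/2"
    and k_series: "read_series u a (unitvec k) < \<beta>/2"
    using eventually_happens'[OF sequentially_bot] by blast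
  define t where "t = 1 - S0 - \<beta>"
  have t: "0 \<le> t" "t \<le> 1" using S0 \<beta> unfolding t_def by auto
  define z where "z c = (\<lambda>j. (1 - \<beta>) * x0 j + c * unitvec k j)" for c
  have z_ball: "z c \<in> read_ball u a" if "\<bar>c\<bar> \<le> t" for c
  proof -
    have "z c \<in> c0" unfolding z_def using x0_c0 unitvec_in_c0 by (rule c0_lincomb)
    moreover have "read_norm u a (z c) \<le> 1"
      unfolding z_def using rp x0_c0 x0_norm \<beta>(1,2) k_x0 k_series that
      by (intro read_norm_perturb_le_one) (auto simp: t_def S0_def)
    ultimately show ?thesis unfolding read_ball_def by simp
  qed
  have z_close: "\<bar>f (z c) - f x0\<bar> < \<epsilon>" if "\<bar>c\<bar> \<le> t" "f \<in> F" for c f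
  proof -
    have "f (z c) = (1 - \<beta>) * f x0 + c * f (unitvec k)"
      unfolding z_def using F(2) that(2) x0_c0 unitvec_in_c0 by (intro read_dual_lincomb) auto
    then have "\<bar>f (z c) - f x0\<bar> \<le> \<beta> * \<bar>f x0\<bar> + \<bar>c\<bar> * \<bar>f (unitvec k)\<bar>"
      using \<beta>(1) abs_triangle_ineq[of "- \<beta> * f x0" "c * f (unitvec k)"] by (simp add: abs_mult algebra_simps)
    also have "\<bar>c\<bar> * \<bar>f (unitvec k)\<bar> \<le> \<bar>f (unitvec k)\<bar>"
      using that(1) t(2) mult_right_mono[of "\<bar>c\<bar>" 1 "\<bar>f (unitvec k)\<bar>"] by simp
    finally show ?thesis using \<beta>_f[OF that(2)] bspec[OF k_F that(2)] by linarith
  qed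
  have "(\<lambda>j. z t j - z (-t) j) = (\<lambda>j. (2 * t) * unitvec k j)"
    unfolding z_def by (auto simp: algebra_simps)
  moreover have "\<bar>(2 * t) * unitvec k k\<bar> \<le> read_norm u a (\<lambda>j. (2 * t) * unitvec k j)"
    using rp by (rule abs_le_read_norm[where M = "2 * t"]) (use t in \<open>simp add: unitvec_def\<close>)
  ultimately have far: "read_norm u a (\<lambda>j. z t j - z (-t) j) \<ge> 2/3 - \<delta>"
    using t(1) S0 \<beta>(3) unfolding t_def by (simp add: unitvec_def)
  have "\<bar>t\<bar> \<le> t" "\<bar>-t\<bar> \<le> t" using t(1) by simp_all
  from z_ball[OF this(1)] z_ball[OF this(2)] z_close[OF this(1)] z_close[OF this(2)] far
  show ?thesis by (rule that)
qed

lemma read_diam_ge: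
  assumes rp: "read_params u a" and W: "W \<subseteq> read_ball u a"
    and far: "\<And>\<delta>. \<delta> > 0 \<Longrightarrow> \<exists>z1\<in>W. \<exists>z2\<in>W. read_norm u a (\<lambda>j. z1 j - z2 j) \<ge> c - \<delta>"
  shows "read_diam u a W \<ge> c"
proof -
  let ?d = "\<lambda>p. read_norm u a (\<lambda>k. fst p k - snd p k)"
  have "?d p \<le> 6" if "p \<in> W \<times> W" for p
  proof -
    have "fst p \<in> read_ball u a" "snd p \<in> read_ball u a" using that W by auto
    then show ?thesis by (rule read_norm_diff_le_six[OF rp])
  qed
  then have bdd: "bdd_above (?d ` (W \<times> W))" by (intro bdd_aboveI[of _ 6]) auto
  show ?thesis unfolding read_diam_def
  proof (rule field_le_epsilon)
    fix \<delta> :: real assume "\<delta> > 0"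
    then obtain z1 z2 where z: "z1 \<in> W" "z2 \<in> W" "read_norm u a (\<lambda>j. z1 j - z2 j) \<ge> c - \<delta>"
      using far by blast
    have "?d (z1, z2) \<le> (SUP p\<in>W \<times> W. ?d p)" by (rule cSUP_upper[OF _ bdd]) (use z in simp)
    then show "c \<le> (SUP p\<in>W \<times> W. ?d p) + \<delta>" using z(3) by simp
  qed
qed

theorem corollary2p8:
  fixes u :: "nat \<Rightarrow> nat \<Rightarrow> real" and a :: "nat \<Rightarrow> nat" and W :: "(nat \<Rightarrow> real) set"
  assumes "read_params u a"
    and "W \<noteq> {}"
    and "openin (subtopology (read_weak_topology u a) (read_ball u a)) W"
  shows "read_diam u a W \<ge> 2/3"
proof -
  note rp = assms(1)
  obtain U where U: "openin (read_weak_topology u a) U" "W = U \<inter> read_ball u a"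
    using assms(3) unfolding openin_subtopology by auto
  obtain x0 where x0: "x0 \<in> U" "x0 \<in> read_ball u a" using assms(2) U(2) by auto
  obtain F \<epsilon> where F: "finite F" "F \<subseteq> read_dual u a" "\<epsilon> > 0"
    and nbhd: "\<And>z. z \<in> c0 \<Longrightarrow> (\<And>f. f \<in> F \<Longrightarrow> \<bar>f z - f x0\<bar> < \<epsilon>) \<Longrightarrow> z \<in> U"
    using read_weak_open_basic_nbhd[OF U(1) x0(1)] by blast
  have in_W: "z \<in> W" if "z \<in> read_ball u a" "\<And>f. f \<in> F \<Longrightarrow> \<bar>f z - f x0\<bar> < \<epsilon>" for z
    using nbhd[of z] that U(2) unfolding read_ball_def by blast
  show ?thesis
  proof (rule read_diam_ge[OF rp])
    show "W \<subseteq> read_ball u a" using U(2) by blast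
    fix \<delta> :: real assume "\<delta> > 0"
    from read_ball_weakly_close_far_pair[OF rp x0(2) F this] in_W
    show "\<exists>z1\<in>W. \<exists>z2\<in>W. read_norm u a (\<lambda>j. z1 j - z2 j) \<ge> 2/3 - \<delta>" by metis
  qed
qed

end
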